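(* Let $\Delta: M_n\to M_n$ be a weak-2-local derivation, let $p_1,\ldots,p_n$ be mutually orthogonal minimal projections in $M_n$, and for $i,j\in\{1,\ldots,n\}$ let $e_{ij}$ be the unique minimal partial isometry in $M_n$ with $e_{ij}^*e_{ij}=p_j$ and $e_{ij}e_{ij}^*=p_i$. Then there exists $w_0\in M_n$ such that $\Delta\left(\sum_{k=1}^n\lambda_kp_k\right)=\left[w_0,\sum_{k=1}^n\lambda_kp_k\right]$ for all $\lambda_1,\ldots,\lambda_n\in\mathbb{C}$, and $\Delta(e_{1j})=[w_0,e_{1j}]$ for all $2\le j\le n$.
   Context: $M_n=M_n(\mathbb{C})$ and $[x,y]=xy-yx$. A derivation on a C$^*$-algebra $A$ is a linear map $D:A\to A$ with $D(ab)=D(a)b+aD(b)$. A (not necessarily linear) map $\Delta:A\to A$ is a weak-2-local derivation if for every $a,b\in A$ and every $\phi\in A^*$ there exists a derivation $D_{a,b,\phi}:A\to A$ such that $\phi\Delta(a)=\phi D_{a,b,\phi}(a)$ and $\phi\Delta(b)=\phi D_{a,b,\phi}(b)$. *)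

theory Defs
  imports "HOL-Analysis.Analysis"
begin

text \<open>M_n(C) is rendered as the type complex^'n^'n for a finite index type 'n
  (n = CARD('n)). Matrix product is **, adjoint is the conjugate transpose.\<close>

type_synonym 'n cmat = "complex ^ 'n ^ 'n"

definition madj :: "'n::finite cmat \<Rightarrow> 'n cmat" where
  "madj A = (\<chi> i j. cnj (A $ j $ i))"

definition msc :: "complex \<Rightarrow> 'n::finite cmat \<Rightarrow> 'n cmat" where
  "msc c A = (\<chi> i j. c * A $ i $ j)"

definition commutator :: "'n::finite cmat \<Rightarrow> 'n cmat \<Rightarrow> 'n cmat" where
  "commutator x y = x ** y - y ** x"

text \<open>Complex-linear maps M_n -> M_n and complex-linear functionals on M_n
  (every linear functional on the finite-dimensional C*-algebra M_n is bounded,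
  so these are exactly the elements of the dual space).\<close>

definition clinear_map :: "('n::finite cmat \<Rightarrow> 'n cmat) \<Rightarrow> bool" where
  "clinear_map D \<longleftrightarrow> (\<forall>A B. D (A + B) = D A + D B) \<and> (\<forall>c A. D (msc c A) = msc c (D A))"

definition clinear_functional :: "('n::finite cmat \<Rightarrow> complex) \<Rightarrow> bool" where
  "clinear_functional \<phi> \<longleftrightarrow> (\<forall>A B. \<phi> (A + B) = \<phi> A + \<phi> B) \<and> (\<forall>c A. \<phi> (msc c A) = c * \<phi> A)"

definition is_derivation :: "('n::finite cmat \<Rightarrow> 'n cmat) \<Rightarrow> bool" where
  "is_derivation D \<longleftrightarrow> clinear_map D \<and> (\<forall>a b. D (a ** b) = D a ** b + a ** D b)"

definition weak_2_local_derivation :: "('n::finite cmat \<Rightarrow> 'n cmat) \<Rightarrow> bool" where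
  "weak_2_local_derivation \<Delta> \<longleftrightarrow>
     (\<forall>a b \<phi>. clinear_functional \<phi> \<longrightarrow>
        (\<exists>D. is_derivation D \<and> \<phi> (\<Delta> a) = \<phi> (D a) \<and> \<phi> (\<Delta> b) = \<phi> (D b)))"

definition is_projection :: "'n::finite cmat \<Rightarrow> bool" where
  "is_projection p \<longleftrightarrow> madj p = p \<and> p ** p = p"

definition minimal_projection :: "'n::finite cmat \<Rightarrow> bool" where
  "minimal_projection p \<longleftrightarrow> is_projection p \<and> p \<noteq> 0 \<and>
     (\<forall>q. is_projection q \<and> q ** p = q \<longrightarrow> q = 0 \<or> q = p)"

end

theory Submission
  imports Defs
begin

text \<open>Cut every matrix into blocks \<open>proj r ** X ** proj s\<close> along the projections \<open>p k\<close> and their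
  complement; a matrix is determined by its blocks. For a derivation \<open>D\<close>, each block of
  \<open>D (\<Sum>k. \<lambda>\<^sub>k p k)\<close> is a scalar multiple of the same block of a single \<open>D (p k)\<close>, and each block
  of \<open>D (e i1 j)\<close> is a block of \<open>D (p i1)\<close> or \<open>D (p j)\<close> multiplied by \<open>e i1 j\<close>. The entries of a
  block are linear functionals, so the weak-2-local property transfers these identities to \<open>\<Delta>\<close>.
  The element \<open>w0\<close> is then assembled block by block: its off-diagonal blocks are read off the
  \<open>\<Delta> (p k)\<close>, and its diagonal blocks, which the \<open>p k\<close> do not see, are chosen as
  \<open>- madj (e i1 j) ** \<Delta> (e i1 j) ** p j\<close> so that \<open>e i1 j\<close> is implemented as well.\<close>

lemma matrix_add_rdistrib: "((A::'a::semiring_1^'n^'m) + B) ** C = A ** C + B ** C"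
  by (simp add: matrix_matrix_mult_def vec_eq_iff distrib_right sum.distrib)

lemma matrix_diff_ldistrib: "(A::'a::ring_1^'n^'m) ** (B - C) = A ** B - A ** C"
  by (simp add: matrix_matrix_mult_def vec_eq_iff right_diff_distrib sum_subtractf)

lemma matrix_diff_rdistrib: "((A::'a::ring_1^'n^'m) - B) ** C = A ** C - B ** C"
  by (simp add: matrix_matrix_mult_def vec_eq_iff left_diff_distrib sum_subtractf)

lemma matrix_mul_minus_left: "(- (A::'a::ring_1^'n^'m)) ** B = - (A ** B)"
  by (simp add: matrix_matrix_mult_def vec_eq_iff sum_negf)

lemma matrix_mul_minus_right: "(A::'a::ring_1^'n^'m) ** (- B) = - (A ** B)"
  by (simp add: matrix_matrix_mult_def vec_eq_iff sum_negf)

lemma matrix_sum_distrib_left: "finite S \<Longrightarrow> (A::'a::semiring_1^'n^'m) ** sum f S = (\<Sum>x\<in>S. A ** f x)"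
  by (induction S rule: finite_induct) (auto simp: matrix_add_ldistrib)

lemma matrix_sum_distrib_right: "finite S \<Longrightarrow> sum f S ** (A::'a::semiring_1^'n^'m) = (\<Sum>x\<in>S. f x ** A)"
  by (induction S rule: finite_induct) (auto simp: matrix_add_rdistrib)

lemma msc_zero_left [simp]: "msc 0 A = 0"
  by (simp add: msc_def vec_eq_iff)

lemma msc_zero_right [simp]: "msc c 0 = 0"
  by (simp add: msc_def vec_eq_iff)

lemma msc_if_zero: "msc c (if b then A else 0) = (if b then msc c A else 0)"
  by simp

lemma msc_one [simp]: "msc 1 A = A"
  by (simp add: msc_def vec_eq_iff)

lemma msc_diff_left: "msc (c - d) A = msc c A - msc d A"
  by (simp add: msc_def vec_eq_iff left_diff_distrib)

lemma msc_minus_left: "msc (- c) A = - msc c A"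
  by (simp add: msc_def vec_eq_iff)

lemma msc_minus_right: "msc c (- A) = - msc c A"
  by (simp add: msc_def vec_eq_iff)

lemma matrix_mul_msc_left: "msc c A ** B = msc c (A ** B)"
  by (simp add: msc_def vec_eq_iff matrix_matrix_mult_def sum_distrib_left mult.assoc)

lemma matrix_mul_msc_right: "A ** msc c B = msc c (A ** B)"
  by (simp add: msc_def vec_eq_iff matrix_matrix_mult_def sum_distrib_left mult.left_commute)

lemma madj_mult: "madj (A ** B) = madj B ** madj (A::'n::finite cmat)"
  by (simp add: madj_def vec_eq_iff matrix_matrix_mult_def mult.commute)

lemma madj_madj [simp]: "madj (madj A) = A"
  by (simp add: madj_def vec_eq_iff)

lemma madj_diff: "madj (A - B) = madj A - madj B"
  by (simp add: madj_def vec_eq_iff)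

lemma madj_mult_self_eq_0:
  fixes Y :: "'n::finite cmat"
  assumes "madj Y ** Y = 0"
  shows "Y = 0"
proof -
  have "Y $ i $ k = 0" for i k
  proof -
    have "(\<Sum>i\<in>UNIV. cnj (Y $ i $ k) * Y $ i $ k) = 0"
      using arg_cong[OF assms, of "\<lambda>X. X $ k $ k"] by (simp add: madj_def matrix_matrix_mult_def)
    then have "(\<Sum>i\<in>UNIV. complex_of_real ((cmod (Y $ i $ k))\<^sup>2)) = 0"
      by (metis (no_types, lifting) complex_norm_square mult.commute sum.cong)
    then have "(\<Sum>i\<in>UNIV. (cmod (Y $ i $ k))\<^sup>2) = 0"
      by (metis of_real_eq_0_iff of_real_sum)
    then show "Y $ i $ k = 0"
      by (simp add: sum_nonneg_eq_0_iff)
  qed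
  then show ?thesis
    by (simp add: vec_eq_iff)
qed

lemma partial_isometry_mult_source:
  assumes "madj E ** E = q" and "is_projection q"
  shows "E ** q = E"
proof -
  have q: "madj q = q" "q ** q = q"
    using assms(2) by (auto simp: is_projection_def)
  define Y where "Y = E - E ** q"
  have "madj Y ** Y = (madj E - q ** madj E) ** (E - E ** q)"
    by (simp add: Y_def madj_diff madj_mult q)
  also have "\<dots> = 0"
    by (simp add: matrix_diff_ldistrib matrix_diff_rdistrib matrix_mul_assoc assms(1))
       (simp add: matrix_mul_assoc[symmetric] assms(1) q)
  finally show ?thesis
    using madj_mult_self_eq_0 by (force simp: Y_def)
qed

lemma partial_isometry_mult_range:
  assumes "E ** madj E = q" and "is_projection q"
  shows "q ** E = E"
proof -
  have "madj E ** q = madj E"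
    using partial_isometry_mult_source[of "madj E" q] assms by simp
  then have "madj (madj E ** q) = E"
    by simp
  then show ?thesis
    using assms(2) by (simp add: madj_mult is_projection_def)
qed

lemma is_derivation_add: "is_derivation D \<Longrightarrow> D (A + B) = D A + D B"
  by (simp add: is_derivation_def clinear_map_def)

lemma is_derivation_msc: "is_derivation D \<Longrightarrow> D (msc c A) = msc c (D A)"
  by (simp add: is_derivation_def clinear_map_def)

lemma is_derivation_mult: "is_derivation D \<Longrightarrow> D (A ** B) = D A ** B + A ** D B"
  by (simp add: is_derivation_def)

lemma is_derivation_zero: "is_derivation D \<Longrightarrow> D 0 = 0"
  using is_derivation_add[of D 0 0] by simp

lemma is_derivation_sum:
  assumes "is_derivation D" and "finite S"
  shows "D (sum f S) = (\<Sum>x\<in>S. D (f x))"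
  using assms(2)
  by (induction S rule: finite_induct) (auto simp: is_derivation_zero[OF assms(1)] is_derivation_add[OF assms(1)])

text \<open>Every entry of \<open>u ** X ** v\<close> is a linear functional of \<open>X\<close>, so an identity between two
  such sandwiches that holds for all derivations is inherited by a weak-2-local derivation.\<close>

lemma weak_2_local_derivation_transfer:
  fixes \<Delta> :: "'n::finite cmat \<Rightarrow> 'n cmat" and u v a b :: "'n cmat"
  assumes "weak_2_local_derivation \<Delta>"
    and "\<And>D. is_derivation D \<Longrightarrow> u ** D a ** v = msc c (u ** D b ** v)"
  shows "u ** \<Delta> a ** v = msc c (u ** \<Delta> b ** v)"
proof -
  have "(u ** \<Delta> a ** v) $ r $ s = msc c (u ** \<Delta> b ** v) $ r $ s" for r s
  proof -
    define \<phi> where "\<phi> X = (u ** X ** v) $ r $ s" for X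
    have "clinear_functional \<phi>"
      unfolding clinear_functional_def \<phi>_def
      by (simp add: matrix_add_ldistrib matrix_add_rdistrib matrix_mul_msc_left matrix_mul_msc_right)
         (simp add: msc_def)
    then obtain D where "is_derivation D" "\<phi> (\<Delta> a) = \<phi> (D a)" "\<phi> (\<Delta> b) = \<phi> (D b)"
      using assms(1) unfolding weak_2_local_derivation_def by blast
    then show ?thesis
      using assms(2) by (simp add: \<phi>_def msc_def)
  qed
  then show ?thesis
    by (simp add: vec_eq_iff)
qed

lemma weak_2_local_derivation_transfer_zero:
  fixes \<Delta> :: "'n::finite cmat \<Rightarrow> 'n cmat" and u v a :: "'n cmat"
  assumes "weak_2_local_derivation \<Delta>" and "\<And>D. is_derivation D \<Longrightarrow> u ** D a ** v = 0"
  shows "u ** \<Delta> a ** v = 0"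
  using weak_2_local_derivation_transfer[OF assms(1), of u a v 0 a] assms(2) by simp

lemma weak_2_local_derivation_transfer_eq:
  fixes \<Delta> :: "'n::finite cmat \<Rightarrow> 'n cmat" and u v a b :: "'n cmat"
  assumes "weak_2_local_derivation \<Delta>"
    and "\<And>D. is_derivation D \<Longrightarrow> u ** D a ** v = u ** D b ** v"
  shows "u ** \<Delta> a ** v = u ** \<Delta> b ** v"
  using weak_2_local_derivation_transfer[OF assms(1), of u a v 1 b] assms(2) by simp

section \<open>Blocks relative to orthogonal projections\<close>

locale orthogonal_projections =
  fixes p :: "'i::finite \<Rightarrow> 'n::finite cmat"
  assumes projection: "is_projection (p i)"
    and orthogonal: "i \<noteq> j \<Longrightarrow> p i ** p j = 0"
begin

lemma madj_p: "madj (p i) = p i"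
  using projection by (simp add: is_projection_def)

lemma p_mult_p: "p i ** p j = (if i = j then p i else 0)"
  using projection[of i] orthogonal[of i j] by (cases "i = j") (simp_all add: is_projection_def)

lemma p_mult_p': "X ** p i ** p j = (if i = j then X ** p i else 0)"
  by (simp add: matrix_mul_assoc[symmetric] p_mult_p)

text \<open>The projection \<open>proj None\<close> complements the \<open>p i\<close>; with it the family partitions the
  identity without our having to show that the \<open>p i\<close> already do.\<close>

definition proj :: "'i option \<Rightarrow> 'n cmat" where
  "proj r = (case r of None \<Rightarrow> mat 1 - (\<Sum>i\<in>UNIV. p i) | Some i \<Rightarrow> p i)"

lemma proj_Some [simp]: "proj (Some i) = p i"
  by (simp add: proj_def)

lemma p_mult_sum_p: "p i ** (\<Sum>j\<in>UNIV. p j) = p i"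
  by (simp add: matrix_sum_distrib_left p_mult_p)

lemma sum_p_mult_p: "(\<Sum>j\<in>UNIV. p j) ** p i = p i"
  by (simp add: matrix_sum_distrib_right p_mult_p)

lemma proj_mult_proj: "proj r ** proj s = (if r = s then proj r else 0)"
proof (cases r; cases s)
  assume "r = None" "s = None"
  then show ?thesis
    by (simp add: proj_def matrix_diff_ldistrib matrix_diff_rdistrib sum_p_mult_p matrix_sum_distrib_left)
qed (auto simp: proj_def matrix_diff_ldistrib matrix_diff_rdistrib p_mult_sum_p sum_p_mult_p p_mult_p)

lemma proj_mult_proj': "X ** proj r ** proj s = (if r = s then X ** proj r else 0)"
  by (simp add: matrix_mul_assoc[symmetric] proj_mult_proj)

lemma p_mult_proj: "p i ** proj s = (if s = Some i then p i else 0)"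
  using proj_mult_proj[of "Some i" s] by auto

lemma proj_mult_p: "proj r ** p i = (if r = Some i then p i else 0)"
  using proj_mult_proj[of r "Some i"] by auto

lemma p_mult_proj': "X ** p i ** proj s = (if s = Some i then X ** p i else 0)"
  by (simp add: matrix_mul_assoc[symmetric] p_mult_proj)

lemma proj_mult_p': "X ** proj r ** p i = (if r = Some i then X ** proj r else 0)"
  by (simp add: matrix_mul_assoc[symmetric] proj_mult_p)

lemmas block_simps = matrix_add_ldistrib matrix_add_rdistrib matrix_diff_ldistrib matrix_diff_rdistrib
  matrix_mul_minus_left matrix_mul_minus_right matrix_mul_msc_left matrix_mul_msc_right matrix_mul_assoc
  p_mult_p p_mult_p' proj_mult_proj proj_mult_proj' p_mult_proj p_mult_proj' proj_mult_p proj_mult_p'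

lemma sum_proj: "(\<Sum>r\<in>UNIV. proj r) = mat 1"
proof -
  have "(\<Sum>r\<in>UNIV. proj r) = proj None + (\<Sum>r\<in>range Some. proj r)"
    by (simp add: UNIV_option_conv)
  also have "(\<Sum>r\<in>range Some. proj r) = (\<Sum>i\<in>UNIV. p i)"
    by (simp add: sum.reindex)
  finally show ?thesis
    by (simp add: proj_def)
qed

lemma sum_blocks: "(\<Sum>r\<in>UNIV. \<Sum>s\<in>UNIV. proj r ** X ** proj s) = X"
proof -
  have "X = (\<Sum>r\<in>UNIV. proj r) ** X ** (\<Sum>s\<in>UNIV. proj s)"
    by (simp add: sum_proj)
  also have "\<dots> = (\<Sum>r\<in>UNIV. proj r ** X ** (\<Sum>s\<in>UNIV. proj s))"
    by (simp only: matrix_sum_distrib_right finite)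
  also have "\<dots> = (\<Sum>r\<in>UNIV. \<Sum>s\<in>UNIV. proj r ** X ** proj s)"
    by (simp only: matrix_sum_distrib_left finite)
  finally show ?thesis ..
qed

lemma block_eqI:
  assumes "\<And>r s. proj r ** X ** proj s = proj r ** Y ** proj s"
  shows "X = Y"
proof -
  have "X = (\<Sum>r\<in>UNIV. \<Sum>s\<in>UNIV. proj r ** X ** proj s)"
    by (rule sum_blocks[symmetric])
  also have "\<dots> = (\<Sum>r\<in>UNIV. \<Sum>s\<in>UNIV. proj r ** Y ** proj s)"
    by (simp only: assms)
  also have "\<dots> = Y"
    by (rule sum_blocks)
  finally show ?thesis .
qed

definition lincomb :: "('i \<Rightarrow> complex) \<Rightarrow> 'n cmat" where
  "lincomb lam = (\<Sum>i\<in>UNIV. msc (lam i) (p i))"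

lemma lincomb_mult_proj: "lincomb lam ** proj s = msc (case_option 0 lam s) (proj s)"
  by (cases s) (simp_all add: lincomb_def matrix_sum_distrib_right block_simps msc_if_zero)

lemma proj_mult_lincomb: "proj r ** lincomb lam = msc (case_option 0 lam r) (proj r)"
  by (cases r) (simp_all add: lincomb_def matrix_sum_distrib_left block_simps msc_if_zero)

lemma commutator_lincomb_block:
  "proj r ** commutator X (lincomb lam) ** proj s
     = msc (case_option 0 lam s - case_option 0 lam r) (proj r ** X ** proj s)"
  by (simp add: commutator_def matrix_diff_ldistrib matrix_diff_rdistrib msc_diff_left
      matrix_mul_assoc[symmetric] lincomb_mult_proj)
     (simp add: matrix_mul_assoc proj_mult_lincomb matrix_mul_msc_left matrix_mul_msc_right)

lemma derivation_p_expand: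
  assumes "is_derivation D"
  shows "D (p i) = D (p i) ** p i + p i ** D (p i)"
  using is_derivation_mult[OF assms, of "p i" "p i"] by (simp add: p_mult_p)

lemma derivation_p_block_zero:
  assumes "is_derivation D" and "r \<noteq> Some i" and "s \<noteq> Some i"
  shows "proj r ** D (p i) ** proj s = 0"
proof -
  have "proj r ** D (p i) ** proj s = proj r ** (D (p i) ** p i + p i ** D (p i)) ** proj s"
    by (subst derivation_p_expand[OF assms(1)]) (rule refl)
  then show ?thesis
    using assms(2,3) by (simp add: block_simps)
qed

lemma derivation_p_diag:
  assumes "is_derivation D"
  shows "p i ** D (p i) ** p i = 0"
proof -
  have "p i ** D (p i) ** p i = p i ** (D (p i) ** p i + p i ** D (p i)) ** p i"
    by (subst derivation_p_expand[OF assms]) (rule refl)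
  then show ?thesis
    by (simp add: block_simps)
qed

lemma derivation_p_cross:
  assumes "is_derivation D" and "i \<noteq> j"
  shows "p i ** D (p j) ** p j = - (p i ** D (p i) ** p j)"
proof -
  have "D (p i) ** p j + p i ** D (p j) = 0"
    using is_derivation_mult[OF assms(1), of "p i" "p j"] assms(2)
    by (simp add: p_mult_p is_derivation_zero[OF assms(1)])
  then have "p i ** (D (p i) ** p j + p i ** D (p j)) ** p j = 0"
    by simp
  then show ?thesis
    by (simp add: block_simps eq_neg_iff_add_eq_0 add.commute)
qed

lemma derivation_p_column:
  assumes "is_derivation D" and "r \<noteq> Some j"
  shows "proj r ** D (p k) ** p j
    = (if k = j then proj r ** D (p j) ** p j else if r = Some k then - (proj r ** D (p j) ** p j) else 0)"
  using assms derivation_p_cross[OF assms(1), of k j] derivation_p_block_zero[OF assms(1), of r k "Some j"]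
  by auto

lemma derivation_lincomb_block:
  assumes "is_derivation D"
  shows "proj r ** D (lincomb lam) ** proj s = (\<Sum>k\<in>UNIV. msc (lam k) (proj r ** D (p k) ** proj s))"
proof -
  have "D (lincomb lam) = (\<Sum>k\<in>UNIV. msc (lam k) (D (p k)))"
    by (simp add: lincomb_def is_derivation_sum[OF assms] is_derivation_msc[OF assms])
  then show ?thesis
    by (simp add: matrix_sum_distrib_left matrix_sum_distrib_right matrix_mul_msc_left matrix_mul_msc_right)
qed

lemma derivation_lincomb_diag:
  assumes "is_derivation D"
  shows "proj r ** D (lincomb lam) ** proj r = 0"
proof -
  have "proj r ** D (p k) ** proj r = 0" for k
    using derivation_p_diag[OF assms, of k] derivation_p_block_zero[OF assms, of r k r]
    by (cases "r = Some k") auto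
  then show ?thesis
    by (simp add: derivation_lincomb_block[OF assms])
qed

lemma derivation_lincomb_column:
  assumes "is_derivation D" and "r \<noteq> Some j"
  shows "proj r ** D (lincomb lam) ** p j
    = msc (lam j - case_option 0 lam r) (proj r ** D (p j) ** p j)"
proof -
  let ?X = "proj r ** D (p j) ** p j"
  have summand: "msc (lam k) (proj r ** D (p k) ** p j)
      = (if k = j then msc (lam k) ?X else 0) - (if r = Some k then msc (lam k) ?X else 0)" for k
    using derivation_p_column[OF assms, of k] assms(2) by (auto simp: msc_minus_right)
  have "proj r ** D (lincomb lam) ** p j = (\<Sum>k\<in>UNIV. msc (lam k) (proj r ** D (p k) ** p j))"
    using derivation_lincomb_block[OF assms(1), of r lam "Some j"] by simp
  also have "\<dots> = (\<Sum>k\<in>UNIV. (if k = j then msc (lam k) ?X else 0) - (if r = Some k then msc (lam k) ?X else 0))"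
    by (rule sum.cong[OF refl summand])
  also have "\<dots> = msc (lam j) ?X - msc (case_option 0 lam r) ?X"
    by (cases r) (simp_all add: sum_subtractf)
  finally show ?thesis
    by (simp add: msc_diff_left)
qed

lemma derivation_lincomb_complement:
  assumes "is_derivation D"
  shows "p i ** D (lincomb lam) ** proj None = msc (lam i) (p i ** D (p i) ** proj None)"
proof -
  let ?X = "p i ** D (p i) ** proj None"
  have summand: "msc (lam k) (p i ** D (p k) ** proj None) = (if k = i then msc (lam i) ?X else 0)" for k
    using derivation_p_block_zero[OF assms, of "Some i" k None] by auto
  have "p i ** D (lincomb lam) ** proj None = (\<Sum>k\<in>UNIV. msc (lam k) (p i ** D (p k) ** proj None))"
    using derivation_lincomb_block[OF assms, of "Some i" lam None] by simp
  also have "\<dots> = (\<Sum>k\<in>UNIV. if k = i then msc (lam i) ?X else 0)"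
    by (rule sum.cong[OF refl summand])
  finally show ?thesis
    by simp
qed

end

section \<open>Matrix units\<close>

locale matrix_units = orthogonal_projections p for p :: "'i::finite \<Rightarrow> 'n::finite cmat" +
  fixes e :: "'i \<Rightarrow> 'i \<Rightarrow> 'n cmat"
  assumes madj_e_mult_e: "madj (e i j) ** e i j = p j"
    and e_mult_madj_e: "e i j ** madj (e i j) = p i"
begin

lemma e_mult_p_source: "e i j ** p j = e i j"
  using partial_isometry_mult_source[OF madj_e_mult_e projection] .

lemma p_range_mult_e: "p i ** e i j = e i j"
  using partial_isometry_mult_range[OF e_mult_madj_e projection] .

lemma p_source_mult_madj_e: "p j ** madj (e i j) = madj (e i j)"
  by (metis e_mult_p_source madj_mult madj_p)

lemma e_mult_p: "e i j ** p k = (if k = j then e i j else 0)"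
  by (metis e_mult_p_source matrix_mul_assoc p_mult_p times0_right)

lemma p_mult_e: "p k ** e i j = (if k = i then e i j else 0)"
  by (metis p_range_mult_e matrix_mul_assoc p_mult_p times0_left)

lemma e_mult_proj: "e i j ** proj s = (if s = Some j then e i j else 0)"
  by (metis e_mult_p_source matrix_mul_assoc p_mult_proj times0_right)

lemma proj_mult_e: "proj r ** e i j = (if r = Some i then e i j else 0)"
  by (metis p_range_mult_e matrix_mul_assoc proj_mult_p times0_left)

lemma proj_mult_madj_e: "proj r ** madj (e i j) = (if r = Some j then madj (e i j) else 0)"
  by (metis p_source_mult_madj_e matrix_mul_assoc proj_mult_p times0_left)

lemma p_mult_madj_e: "p k ** madj (e i j) = (if k = j then madj (e i j) else 0)"
  using proj_mult_madj_e[of "Some k"] by simp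

lemma e_mult_p': "X ** e i j ** p k = (if k = j then X ** e i j else 0)"
  and p_mult_e': "X ** p k ** e i j = (if k = i then X ** e i j else 0)"
  and e_mult_proj': "X ** e i j ** proj s = (if s = Some j then X ** e i j else 0)"
  and proj_mult_e': "X ** proj r ** e i j = (if r = Some i then X ** e i j else 0)"
  and proj_mult_madj_e': "X ** proj r ** madj (e i j) = (if r = Some j then X ** madj (e i j) else 0)"
  and p_mult_madj_e': "X ** p k ** madj (e i j) = (if k = j then X ** madj (e i j) else 0)"
  by (simp_all add: matrix_mul_assoc[symmetric] e_mult_p p_mult_e e_mult_proj proj_mult_e
      proj_mult_madj_e p_mult_madj_e)

lemmas unit_simps = e_mult_p p_mult_e e_mult_proj proj_mult_e proj_mult_madj_e p_mult_madj_e
  e_mult_p' p_mult_e' e_mult_proj' proj_mult_e' proj_mult_madj_e' p_mult_madj_e'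

lemma derivation_e_block_zero:
  assumes "is_derivation D" and "r \<noteq> Some i" and "s \<noteq> Some j"
  shows "proj r ** D (e i j) ** proj s = 0"
proof -
  have "D (e i j) = D (p i) ** e i j + p i ** D (e i j)"
    using is_derivation_mult[OF assms(1), of "p i" "e i j"] by (simp add: p_range_mult_e)
  then have "proj r ** D (e i j) ** proj s = proj r ** (D (p i) ** e i j + p i ** D (e i j)) ** proj s"
    by (rule arg_cong)
  then show ?thesis
    using assms(2,3) by (simp add: block_simps unit_simps)
qed

lemma derivation_e_column:
  assumes "is_derivation D" and "r \<noteq> Some i"
  shows "proj r ** D (e i j) ** p j = proj r ** D (p i) ** e i j"
proof -
  have "D (e i j) = D (p i) ** e i j + p i ** D (e i j)"
    using is_derivation_mult[OF assms(1), of "p i" "e i j"] by (simp add: p_range_mult_e)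
  then have "proj r ** D (e i j) ** p j = proj r ** (D (p i) ** e i j + p i ** D (e i j)) ** p j"
    by (rule arg_cong)
  then show ?thesis
    using assms(2) by (simp add: block_simps unit_simps)
qed

lemma derivation_e_row:
  assumes "is_derivation D" and "s \<noteq> Some j"
  shows "p i ** D (e i j) ** proj s = e i j ** D (p j) ** proj s"
proof -
  have "D (e i j) = D (e i j) ** p j + e i j ** D (p j)"
    using is_derivation_mult[OF assms(1), of "e i j" "p j"] by (simp add: e_mult_p_source)
  then have "p i ** D (e i j) ** proj s = p i ** (D (e i j) ** p j + e i j ** D (p j)) ** proj s"
    by (rule arg_cong)
  then show ?thesis
    using assms(2) by (simp add: block_simps unit_simps)
qed

text \<open>Transfer needs the same sandwich on both sides, but \<open>D (e i j) ** p j\<close> and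
  \<open>D (p i) ** e i j\<close> have different right factors; the common right factor \<open>p j + e i j\<close> carries
  both, the unwanted blocks vanishing.\<close>

lemma column_test_iff:
  assumes "proj r ** A ** p i = 0" and "proj r ** B ** p j = 0"
  shows "proj r ** A ** (p j + e i j) = proj r ** B ** (p j + e i j)
    \<longleftrightarrow> proj r ** A ** p j = proj r ** B ** e i j"
proof -
  have "proj r ** A ** e i j = proj r ** A ** p i ** e i j"
    by (simp add: matrix_mul_assoc[symmetric] p_range_mult_e)
  then show ?thesis
    using assms by (simp add: matrix_add_ldistrib)
qed

lemma row_test_iff:
  assumes "p j ** A ** proj s = 0" and "p i ** B ** proj s = 0"
  shows "(p i + e i j) ** A ** proj s = (p i + e i j) ** B ** proj s
    \<longleftrightarrow> p i ** A ** proj s = e i j ** B ** proj s"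
proof -
  have "e i j ** A ** proj s = e i j ** (p j ** A ** proj s)"
    by (simp add: matrix_mul_assoc e_mult_p_source)
  then show ?thesis
    using assms by (simp add: matrix_add_rdistrib)
qed

end

section \<open>Weak-2-local derivations on matrix units\<close>

locale weak_2_local_matrix_units = matrix_units p e
  for p :: "'i::finite \<Rightarrow> 'n::finite cmat" and e +
  fixes \<Delta> :: "'n cmat \<Rightarrow> 'n cmat"
  assumes weak_2_local: "weak_2_local_derivation \<Delta>"
begin

lemma Delta_p_block_zero: "r \<noteq> Some i \<Longrightarrow> s \<noteq> Some i \<Longrightarrow> proj r ** \<Delta> (p i) ** proj s = 0"
  by (rule weak_2_local_derivation_transfer_zero[OF weak_2_local]) (rule derivation_p_block_zero)

lemma Delta_p_diag: "p i ** \<Delta> (p i) ** p i = 0"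
  by (rule weak_2_local_derivation_transfer_zero[OF weak_2_local]) (rule derivation_p_diag)

lemma Delta_p_cross: "i \<noteq> j \<Longrightarrow> p i ** \<Delta> (p j) ** p j = - (p i ** \<Delta> (p i) ** p j)"
  using weak_2_local_derivation_transfer[OF weak_2_local, of "p i" "p j" "p j" "- 1" "p i"]
    derivation_p_cross
  by (simp add: msc_minus_left)

lemma Delta_lincomb_diag: "proj r ** \<Delta> (lincomb lam) ** proj r = 0"
  by (rule weak_2_local_derivation_transfer_zero[OF weak_2_local]) (rule derivation_lincomb_diag)

lemma Delta_lincomb_column:
  "r \<noteq> Some j \<Longrightarrow> proj r ** \<Delta> (lincomb lam) ** p j
    = msc (lam j - case_option 0 lam r) (proj r ** \<Delta> (p j) ** p j)"
  by (rule weak_2_local_derivation_transfer[OF weak_2_local]) (rule derivation_lincomb_column)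

lemma Delta_lincomb_complement:
  "p i ** \<Delta> (lincomb lam) ** proj None = msc (lam i) (p i ** \<Delta> (p i) ** proj None)"
  by (rule weak_2_local_derivation_transfer[OF weak_2_local]) (rule derivation_lincomb_complement)

lemma Delta_e_block_zero: "r \<noteq> Some i \<Longrightarrow> s \<noteq> Some j \<Longrightarrow> proj r ** \<Delta> (e i j) ** proj s = 0"
  by (rule weak_2_local_derivation_transfer_zero[OF weak_2_local]) (rule derivation_e_block_zero)

lemma Delta_e_column:
  assumes "i \<noteq> j" and "r \<noteq> Some i"
  shows "proj r ** \<Delta> (e i j) ** p j = proj r ** \<Delta> (p i) ** e i j"
proof -
  have zero: "proj r ** \<Delta> (e i j) ** p i = 0" "proj r ** \<Delta> (p i) ** p j = 0"
    using Delta_e_block_zero[of r i "Some i" j] Delta_p_block_zero[of r i "Some j"] assms by auto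
  have "proj r ** \<Delta> (e i j) ** (p j + e i j) = proj r ** \<Delta> (p i) ** (p j + e i j)"
  proof (rule weak_2_local_derivation_transfer_eq[OF weak_2_local])
    fix D :: "'n cmat \<Rightarrow> 'n cmat"
    assume D: "is_derivation D"
    show "proj r ** D (e i j) ** (p j + e i j) = proj r ** D (p i) ** (p j + e i j)"
      using derivation_e_column[OF D assms(2)] assms
        derivation_e_block_zero[OF D, of r i "Some i" j] derivation_p_block_zero[OF D, of r i "Some j"]
      by (simp add: column_test_iff)
  qed
  then show ?thesis
    using column_test_iff[OF zero] by blast
qed

lemma Delta_e_row:
  assumes "i \<noteq> j" and "s \<noteq> Some j"
  shows "p i ** \<Delta> (e i j) ** proj s = e i j ** \<Delta> (p j) ** proj s"
proof -
  have zero: "p j ** \<Delta> (e i j) ** proj s = 0" "p i ** \<Delta> (p j) ** proj s = 0"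
    using Delta_e_block_zero[of "Some j" i s j] Delta_p_block_zero[of "Some i" j s] assms by auto
  have "(p i + e i j) ** \<Delta> (e i j) ** proj s = (p i + e i j) ** \<Delta> (p j) ** proj s"
  proof (rule weak_2_local_derivation_transfer_eq[OF weak_2_local])
    fix D :: "'n cmat \<Rightarrow> 'n cmat"
    assume D: "is_derivation D"
    show "(p i + e i j) ** D (e i j) ** proj s = (p i + e i j) ** D (p j) ** proj s"
      using derivation_e_row[OF D assms(2)] assms
        derivation_e_block_zero[OF D, of "Some j" i s j] derivation_p_block_zero[OF D, of "Some i" j s]
      by (simp add: row_test_iff)
  qed
  then show ?thesis
    using row_test_iff[OF zero] by blast
qed

text \<open>The first two terms carry the off-diagonal blocks that \<open>\<Delta>\<close> forces through the \<open>p k\<close> (for an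
  inner derivation \<open>commutator w\<close> they give back the off-diagonal blocks of \<open>w\<close>); the diagonal
  blocks are not seen by the \<open>p k\<close>, and the last term chooses them so that the \<open>e i1 k\<close> are
  implemented too.\<close>

definition witness_term :: "'i \<Rightarrow> 'i \<Rightarrow> 'n cmat" where
  "witness_term i1 k = \<Delta> (p k) ** p k - p k ** \<Delta> (p k) ** proj None
     - (if k = i1 then 0 else madj (e i1 k) ** \<Delta> (e i1 k) ** p k)"

definition witness :: "'i \<Rightarrow> 'n cmat" where
  "witness i1 = (\<Sum>k\<in>UNIV. witness_term i1 k)"

lemma witness_block: "A ** witness i1 ** B = (\<Sum>k\<in>UNIV. A ** witness_term i1 k ** B)"
  unfolding witness_def by (simp only: matrix_sum_distrib_left matrix_sum_distrib_right finite)

lemma witness_column: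
  assumes "r \<noteq> Some j"
  shows "proj r ** witness i1 ** p j = proj r ** \<Delta> (p j) ** p j"
proof -
  have "proj r ** witness_term i1 k ** p j
      = (if k = j then proj r ** \<Delta> (p j) ** p j else 0)" for k
    using assms by (cases "k = j"; cases "k = i1") (simp_all add: witness_term_def block_simps unit_simps)
  then show ?thesis
    by (simp add: witness_block)
qed

lemma witness_row:
  assumes "s \<noteq> Some j"
  shows "p j ** witness i1 ** proj s = - (p j ** \<Delta> (p j) ** proj s)"
proof (cases s)
  case None
  have "p j ** witness_term i1 k ** proj None
      = (if k = j then - (p j ** \<Delta> (p j) ** proj None) else 0)" for k
    by (cases "k = j"; cases "k = i1") (simp_all add: witness_term_def block_simps unit_simps)
  then show ?thesis
    using None by (simp add: witness_block)
next
  case (Some m)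
  with assms have "j \<noteq> m"
    by simp
  have "p j ** witness_term i1 k ** p m
      = (if k = m then p j ** \<Delta> (p m) ** p m else 0)" for k
    using \<open>j \<noteq> m\<close> by (cases "k = m"; cases "k = i1"; cases "k = j") (simp_all add: witness_term_def block_simps unit_simps)
  then show ?thesis
    using Some Delta_p_cross[OF \<open>j \<noteq> m\<close>] by (simp add: witness_block)
qed

lemma witness_diag:
  "p j ** witness i1 ** p j = (if j = i1 then 0 else - (madj (e i1 j) ** \<Delta> (e i1 j) ** p j))"
proof -
  have "p j ** witness_term i1 k ** p j
      = (if k = j then (if j = i1 then 0 else - (madj (e i1 j) ** \<Delta> (e i1 j) ** p j)) else 0)" for k
    by (cases "k = j"; cases "k = i1")
       (simp_all add: witness_term_def block_simps unit_simps Delta_p_diag p_source_mult_madj_e)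
  then show ?thesis
    by (simp add: witness_block)
qed

lemma witness_e_corner:
  assumes "j \<noteq> i1"
  shows "p i1 ** witness i1 ** e i1 j = 0"
    and "e i1 j ** witness i1 ** p j = - (p i1 ** \<Delta> (e i1 j) ** p j)"
proof -
  have "p i1 ** witness i1 ** e i1 j = (p i1 ** witness i1 ** p i1) ** e i1 j"
    by (simp only: matrix_mul_assoc[symmetric] p_range_mult_e)
  then show "p i1 ** witness i1 ** e i1 j = 0"
    by (simp add: witness_diag)
  have "e i1 j ** witness i1 ** p j = e i1 j ** (p j ** witness i1 ** p j)"
    by (simp only: matrix_mul_assoc e_mult_p_source)
  also have "\<dots> = - (e i1 j ** madj (e i1 j) ** \<Delta> (e i1 j) ** p j)"
    using assms by (simp add: witness_diag matrix_mul_minus_right matrix_mul_assoc)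
  finally show "e i1 j ** witness i1 ** p j = - (p i1 ** \<Delta> (e i1 j) ** p j)"
    by (simp add: e_mult_madj_e)
qed

lemma Delta_lincomb: "\<Delta> (lincomb lam) = commutator (witness i1) (lincomb lam)"
proof (rule block_eqI)
  fix r s
  show "proj r ** \<Delta> (lincomb lam) ** proj s = proj r ** commutator (witness i1) (lincomb lam) ** proj s"
  proof (cases "r = s")
    case True
    then show ?thesis
      by (simp add: Delta_lincomb_diag commutator_lincomb_block)
  next
    case False
    then consider j where "s = Some j" "r \<noteq> Some j" | i where "r = Some i" "s = None"
      by (cases r; cases s) auto
    then show ?thesis
    proof cases
      case 1
      then show ?thesis
        using commutator_lincomb_block[of r "witness i1" lam s]
        by (simp add: Delta_lincomb_column witness_column)
    next
      case 2
      then show ?thesis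
        using commutator_lincomb_block[of r "witness i1" lam s]
        by (simp add: Delta_lincomb_complement witness_row
            msc_minus_left msc_minus_right)
    qed
  qed
qed

lemma Delta_e:
  assumes "j \<noteq> i1"
  shows "\<Delta> (e i1 j) = commutator (witness i1) (e i1 j)"
proof (rule block_eqI)
  fix r s
  let ?E = "e i1 j" and ?w = "witness i1"
  have w_E: "proj r ** ?w ** ?E = (proj r ** ?w ** p i1) ** ?E"
    by (simp only: matrix_mul_assoc[symmetric] p_range_mult_e)
  have E_w: "?E ** ?w ** proj s = ?E ** (p j ** ?w ** proj s)"
    by (simp only: matrix_mul_assoc e_mult_p_source)
  have "proj r ** ?w ** ?E ** proj s - proj r ** ?E ** ?w ** proj s = proj r ** \<Delta> ?E ** proj s"
  proof (cases "r = Some i1"; cases "s = Some j")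
    assume "r \<noteq> Some i1" "s \<noteq> Some j"
    then show ?thesis
      by (simp add: Delta_e_block_zero unit_simps)
  next
    assume r: "r \<noteq> Some i1" and s: "s = Some j"
    have "proj r ** ?w ** ?E ** proj s - proj r ** ?E ** ?w ** proj s = proj r ** ?w ** ?E"
      using r s by (simp add: unit_simps)
    also have "\<dots> = proj r ** \<Delta> (p i1) ** p i1 ** ?E"
      by (simp only: w_E witness_column[OF r])
    also have "\<dots> = proj r ** \<Delta> ?E ** proj s"
      using s Delta_e_column[OF not_sym[OF assms] r] by (simp add: p_mult_e')
    finally show ?thesis .
  next
    assume r: "r = Some i1" and s: "s \<noteq> Some j"
    have "proj r ** ?w ** ?E ** proj s - proj r ** ?E ** ?w ** proj s = - (?E ** ?w ** proj s)"
      using r s by (simp add: unit_simps)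
    also have "\<dots> = ?E ** \<Delta> (p j) ** proj s"
      by (simp only: E_w witness_row[OF s] matrix_mul_minus_right minus_minus matrix_mul_assoc e_mult_p_source)
    also have "\<dots> = proj r ** \<Delta> ?E ** proj s"
      using r Delta_e_row[OF not_sym[OF assms] s] by simp
    finally show ?thesis .
  next
    assume "r = Some i1" "s = Some j"
    then show ?thesis
      using witness_e_corner[OF assms] by (simp add: unit_simps)
  qed
  then show "proj r ** \<Delta> ?E ** proj s = proj r ** commutator ?w ?E ** proj s"
    by (simp add: commutator_def matrix_diff_ldistrib matrix_diff_rdistrib matrix_mul_assoc)
qed

end

theorem proposition2p10:
  fixes \<Delta> :: "'n::finite cmat \<Rightarrow> 'n cmat"
    and p :: "'n \<Rightarrow> 'n cmat"
    and e :: "'n \<Rightarrow> 'n \<Rightarrow> 'n cmat"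
    and i1 :: 'n
  assumes "weak_2_local_derivation \<Delta>"
    and "\<And>i. minimal_projection (p i)"
    and "\<And>i j. i \<noteq> j \<Longrightarrow> p i ** p j = 0"
    and "\<And>i j. madj (e i j) ** e i j = p j"
    and "\<And>i j. e i j ** madj (e i j) = p i"
  shows "\<exists>w0. (\<forall>lam :: 'n \<Rightarrow> complex.
                 \<Delta> (\<Sum>k\<in>UNIV. msc (lam k) (p k)) = commutator w0 (\<Sum>k\<in>UNIV. msc (lam k) (p k)))
             \<and> (\<forall>j. j \<noteq> i1 \<longrightarrow> \<Delta> (e i1 j) = commutator w0 (e i1 j))"
proof -
  interpret weak_2_local_matrix_units p e \<Delta>
    using assms by unfold_locales (auto simp: minimal_projection_def)
  show ?thesis
    using Delta_lincomb Delta_e unfolding lincomb_def by blast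
qed

end
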